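(* There are absolute constants $c, c' > 0$ such that for all $d \geq 2$, $n \geq 1$ and $s \geq 1$ the following holds: if there is an $LK_d(MOD_p)$-refutation of size $s$ of the set $\neg PHP_n$, then Prover has a winning strategy for the game $G(d + c, n, c' \log s)$. (In the paper's notation: Prover has a winning strategy for $G(d+O(1), n, O(\log s))$.)
   Context: Fix a prime $p$. Formulas are built from propositional variables using the connectives $\neg$, unbounded-arity $\bigvee$, and unbounded-arity connectives $MOD_{p,i}$, $i=0,\dots,p-1$, where $MOD_{p,i}(y_1,\dots,y_k)$ means $\sum_j y_j \equiv i \pmod p$ (there is no $\bigwedge$; conjunctions are expressed via $\neg,\bigvee$). The depth of a formula is the maximal number of alternations of connectives along a path; the size of a formula or proof is its total number of symbols. $LK(MOD_p)$ is the sequent calculus with initial sequents $\varphi \to \varphi$, the structural rules (weakening, contraction, exchange), cut, left and right $\neg$-introduction, the rule $\bigvee$:left (from $\varphi_i,\Gamma\to\Delta$ for all $i\le t$ infer $\bigvee_{i\le t}\varphi_i,\Gamma\to\Delta$), the rule $\bigvee$:right (from $\Gamma\to\Delta,\varphi_j$ infer $\Gamma\to\Delta,\bigvee_{i\le t}\varphi_i$, any $j\le t$), and the $MOD_p$-axioms: $MOD_{p,0}(\emptyset)$; $\neg MOD_{p,i}(\emptyset)$ for $i=1,\dots,p-1$; and $MOD_{p,i}(\Gamma,\phi)\equiv[(MOD_{p,i}(\Gamma)\wedge\neg\phi)\vee(MOD_{p,i-1}(\Gamma)\wedge\phi)]$ for $i=0,\dots,p-1$ ($i-1$ taken mod $p$,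 $\Gamma$ a possibly empty sequence of formulas). $LK_d(MOD_p)$ is the subsystem in which all formulas have depth at most $d$. A refutation of a set of formulas $\Sigma$ is a derivation of the empty sequent in which the sequents $\to \psi$, $\psi\in\Sigma$, may be used as additional initial sequents. $\neg PHP_n$ is the set of formulas in variables $p_{ij}$, $i\in[n+1]$, $j\in[n]$: $\bigvee_{j\in[n]}p_{ij}$ for each $i\in[n+1]$; $\neg p_{i_1 j}\vee\neg p_{i_2 j}$ for all $i_1\neq i_2\in[n+1]$, $j\in[n]$; $\neg p_{ij_1}\vee\neg p_{ij_2}$ for all $i\in[n+1]$, $j_1\ne j_2\in[n]$. The game $G(d,n,t)$ is played by Prover and Liar for $t$ rounds. In each round Prover asks one question: (P1) the truth value of a formula $\varphi$; or (P2) if Liar already gave a truth value to $\varphi=\bigvee_{i\le u}\varphi_i$: (a) if he said false, Prover may ask the truth value of some one $\varphi_j$, $j\le u$; (b) if he said true, Prover may request a witness, i.e. a $j\le u$ with $\varphi_j$ stated true. All formulas asked are in the variables of $\neg PHP_n$, of depth at most $d$ and size at most $2^t$. Liar must obey: (L0) a formula asked again gets the same answer; (L1) $\varphi$ and $\neg\varphi$ get opposite values; (L2) in (P2a) he must answer false, in (P2b) he must give value true to some $\varphi_j$, $j\le u$; (L3) every $MOD_p$-axiom asked gets true; (L4) every formula of $\neg PHP_n$ asked gets true. Liar wins a play if he can answer all $t$ questions obeying the rules; otherwise Prover wins. A winning strategy for Prover is one winning against every Liar. *)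

theory Defs
  imports Complex_Main "HOL-Computational_Algebra.Primes"
begin

text \<open>Propositional variables are pairs of naturals; the PHP variable p_ij is Var (i,j).
  Mod i fs stands for MOD_{p,i}(fs) (the prime p is a separate parameter; well-formedness
  requires i < p).\<close>

datatype fm = Var "nat \<times> nat" | Neg fm | Disj "fm list" | Mod nat "fm list"

datatype conn = CNeg | COr | CMod nat

text \<open>Alternation depth: a maximal block of the same connective along a path counts once.
  dp c f is the depth of f below a parent connective c.\<close>

fun dp :: "conn option \<Rightarrow> fm \<Rightarrow> nat" where
  "dp c (Var v) = 0"
| "dp c (Neg f) = (if c = Some CNeg then 0 else 1) + dp (Some CNeg) f"
| "dp c (Disj fs) = (if c = Some COr then 0 else 1) + foldr max (map (dp (Some COr)) fs) 0"
| "dp c (Mod i fs) = (if c = Some (CMod i) then 0 else 1) + foldr max (map (dp (Some (CMod i))) fs) 0"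

definition depth :: "fm \<Rightarrow> nat" where
  "depth f = dp None f"

fun fsize :: "fm \<Rightarrow> nat" where
  "fsize (Var v) = 1"
| "fsize (Neg f) = 1 + fsize f"
| "fsize (Disj fs) = 1 + sum_list (map fsize fs)"
| "fsize (Mod i fs) = 1 + sum_list (map fsize fs)"

fun fvars :: "fm \<Rightarrow> (nat \<times> nat) set" where
  "fvars (Var v) = {v}"
| "fvars (Neg f) = fvars f"
| "fvars (Disj fs) = \<Union> (set (map fvars fs))"
| "fvars (Mod i fs) = \<Union> (set (map fvars fs))"

fun wf :: "nat \<Rightarrow> fm \<Rightarrow> bool" where
  "wf p (Var v) = True"
| "wf p (Neg f) = wf p f"
| "wf p (Disj fs) = (\<forall>f\<in>set fs. wf p f)"
| "wf p (Mod i fs) = (i < p \<and> (\<forall>f\<in>set fs. wf p f))"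

definition Conj2 :: "fm \<Rightarrow> fm \<Rightarrow> fm" where
  "Conj2 a b = Neg (Disj [Neg a, Neg b])"

definition Iff :: "fm \<Rightarrow> fm \<Rightarrow> fm" where
  "Iff a b = Conj2 (Disj [Neg a, b]) (Disj [Neg b, a])"

definition mod_axiom :: "nat \<Rightarrow> fm \<Rightarrow> bool" where
  "mod_axiom p \<psi> \<longleftrightarrow>
     \<psi> = Mod 0 []
   \<or> (\<exists>i. 1 \<le> i \<and> i < p \<and> \<psi> = Neg (Mod i []))
   \<or> (\<exists>i \<Gamma> \<phi>. i < p \<and>
        \<psi> = Iff (Mod i (\<Gamma> @ [\<phi>]))
                (Disj [Conj2 (Mod i \<Gamma>) (Neg \<phi>), Conj2 (Mod ((i + p - 1) mod p) \<Gamma>) \<phi>]))"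

definition php_vars :: "nat \<Rightarrow> (nat \<times> nat) set" where
  "php_vars n = {1..n+1} \<times> {1..n}"

definition negPHP :: "nat \<Rightarrow> fm set" where
  "negPHP n =
     {Disj (map (\<lambda>j. Var (i, j)) [1..<n+1]) | i. i \<in> {1..n+1}}
   \<union> {Disj [Neg (Var (i1, j)), Neg (Var (i2, j))] | i1 i2 j.
        i1 \<in> {1..n+1} \<and> i2 \<in> {1..n+1} \<and> i1 \<noteq> i2 \<and> j \<in> {1..n}}
   \<union> {Disj [Neg (Var (i, j1)), Neg (Var (i, j2))] | i j1 j2.
        i \<in> {1..n+1} \<and> j1 \<in> {1..n} \<and> j2 \<in> {1..n} \<and> j1 \<noteq> j2}"

type_synonym sequent = "fm list \<times> fm list"

definition seq_size :: "sequent \<Rightarrow> nat" where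
  "seq_size S = 1 + sum_list (map fsize (fst S)) + sum_list (map fsize (snd S))"

definition seq_fms :: "sequent \<Rightarrow> fm set" where
  "seq_fms S = set (fst S) \<union> set (snd S)"

text \<open>Inference rules: premises (list) and conclusion. Principal formulas sit at the
  front of the antecedent and at the end of the succedent; exchange makes this general.\<close>

inductive lk_rule :: "sequent list \<Rightarrow> sequent \<Rightarrow> bool" where
  weakL: "lk_rule [(G, D)] (\<phi> # G, D)"
| weakR: "lk_rule [(G, D)] (G, D @ [\<phi>])"
| contrL: "lk_rule [(\<phi> # \<phi> # G, D)] (\<phi> # G, D)"
| contrR: "lk_rule [(G, D @ [\<phi>, \<phi>])] (G, D @ [\<phi>])"
| exchL: "lk_rule [(G1 @ a # b # G2, D)] (G1 @ b # a # G2, D)"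
| exchR: "lk_rule [(G, D1 @ a # b # D2)] (G, D1 @ b # a # D2)"
| cut: "lk_rule [(G, D @ [\<phi>]), (\<phi> # G, D)] (G, D)"
| negL: "lk_rule [(G, D @ [\<phi>])] (Neg \<phi> # G, D)"
| negR: "lk_rule [(\<phi> # G, D)] (G, D @ [Neg \<phi>])"
| disjL: "lk_rule (map (\<lambda>\<phi>. (\<phi> # G, D)) \<phi>s) (Disj \<phi>s # G, D)"
| disjR: "\<phi> \<in> set \<phi>s \<Longrightarrow> lk_rule [(G, D @ [\<phi>])] (G, D @ [Disj \<phi>s])"

definition initial_seq :: "nat \<Rightarrow> fm set \<Rightarrow> sequent \<Rightarrow> bool" where
  "initial_seq p \<Sigma> S \<longleftrightarrow>
     (\<exists>\<phi>. S = ([\<phi>], [\<phi>]))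
   \<or> (\<exists>\<psi>. mod_axiom p \<psi> \<and> S = ([], [\<psi>]))
   \<or> (\<exists>\<psi>\<in>\<Sigma>. S = ([], [\<psi>]))"

definition lk_refutation :: "nat \<Rightarrow> nat \<Rightarrow> fm set \<Rightarrow> sequent list \<Rightarrow> bool" where
  "lk_refutation p d \<Sigma> P \<longleftrightarrow>
     P \<noteq> [] \<and> last P = ([], []) \<and>
     (\<forall>k < length P. \<forall>\<phi> \<in> seq_fms (P ! k). wf p \<phi> \<and> depth \<phi> \<le> d) \<and>
     (\<forall>k < length P. initial_seq p \<Sigma> (P ! k) \<or>
        (\<exists>ps. set ps \<subseteq> set (take k P) \<and> lk_rule ps (P ! k)))"

definition proof_size :: "sequent list \<Rightarrow> nat" where
  "proof_size P = sum_list (map seq_size P)"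

datatype question = Q1 fm | Q2a fm nat | Q2b fm
datatype answer = Val bool | Wit nat

type_synonym history = "(question \<times> answer) list"

fun args :: "fm \<Rightarrow> fm list" where
  "args (Disj fs) = fs"
| "args _ = []"

fun stmt :: "question \<times> answer \<Rightarrow> (fm \<times> bool) set" where
  "stmt (Q1 \<phi>, Val b) = {(\<phi>, b)}"
| "stmt (Q2a \<phi> j, Val b) = {(args \<phi> ! j, b)}"
| "stmt (Q2b \<phi>, Wit j) = {(args \<phi> ! j, True)}"
| "stmt _ = {}"

definition stated :: "history \<Rightarrow> (fm \<times> bool) set" where
  "stated h = \<Union> (set (map stmt h))"

definition admissible :: "nat \<Rightarrow> nat \<Rightarrow> nat \<Rightarrow> nat \<Rightarrow> fm \<Rightarrow> bool" where
  "admissible p d n t \<phi> \<longleftrightarrow>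
     wf p \<phi> \<and> depth \<phi> \<le> d \<and> fsize \<phi> \<le> 2 ^ t \<and> fvars \<phi> \<subseteq> php_vars n"

definition q_legal :: "nat \<Rightarrow> nat \<Rightarrow> nat \<Rightarrow> nat \<Rightarrow> history \<Rightarrow> question \<Rightarrow> bool" where
  "q_legal p d n t h q \<longleftrightarrow>
     (case q of
        Q1 \<phi> \<Rightarrow> admissible p d n t \<phi>
      | Q2a \<phi> j \<Rightarrow> (\<exists>\<phi>s. \<phi> = Disj \<phi>s \<and> (\<phi>, False) \<in> stated h \<and> j < length \<phi>s
                       \<and> admissible p d n t (\<phi>s ! j))
      | Q2b \<phi> \<Rightarrow> (\<exists>\<phi>s. \<phi> = Disj \<phi>s \<and> (\<phi>, True) \<in> stated h))"

text \<open>Rules L0, L1, L3, L4 on the set of all truth values stated so far.\<close>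

definition liar_consistent :: "nat \<Rightarrow> nat \<Rightarrow> (fm \<times> bool) set \<Rightarrow> bool" where
  "liar_consistent p n S \<longleftrightarrow>
     (\<forall>\<phi>. \<not> ((\<phi>, True) \<in> S \<and> (\<phi>, False) \<in> S))
   \<and> (\<forall>\<phi> b b'. (\<phi>, b) \<in> S \<and> (Neg \<phi>, b') \<in> S \<longrightarrow> b' = (\<not> b))
   \<and> (\<forall>\<phi> b. (\<phi>, b) \<in> S \<and> mod_axiom p \<phi> \<longrightarrow> b)
   \<and> (\<forall>\<phi> b. (\<phi>, b) \<in> S \<and> \<phi> \<in> negPHP n \<longrightarrow> b)"

text \<open>Answer legality (L2 included: in P2a the answer is false, in P2b a witness index).\<close>

definition a_legal :: "nat \<Rightarrow> nat \<Rightarrow> history \<Rightarrow> question \<Rightarrow> answer \<Rightarrow> bool" where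
  "a_legal p n h q a \<longleftrightarrow>
     (case (q, a) of
        (Q1 \<phi>, Val b) \<Rightarrow> True
      | (Q2a \<phi> j, Val b) \<Rightarrow> b = False
      | (Q2b \<phi>, Wit j) \<Rightarrow> j < length (args \<phi>)
      | _ \<Rightarrow> False)
   \<and> liar_consistent p n (stated h \<union> stmt (q, a))"

type_synonym prover_strategy = "history \<Rightarrow> question"
type_synonym liar_strategy = "history \<Rightarrow> question \<Rightarrow> answer"

fun play :: "prover_strategy \<Rightarrow> liar_strategy \<Rightarrow> nat \<Rightarrow> history" where
  "play \<sigma> \<tau> 0 = []"
| "play \<sigma> \<tau> (Suc k) = play \<sigma> \<tau> k @ [(\<sigma> (play \<sigma> \<tau> k), \<tau> (play \<sigma> \<tau> k) (\<sigma> (play \<sigma> \<tau> k)))]"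

definition winning_strategy :: "nat \<Rightarrow> nat \<Rightarrow> nat \<Rightarrow> nat \<Rightarrow> prover_strategy \<Rightarrow> bool" where
  "winning_strategy p d n t \<sigma> \<longleftrightarrow>
     (\<forall>\<tau>. \<exists>k < t.
        (\<forall>m \<le> k. q_legal p d n t (play \<sigma> \<tau> m) (\<sigma> (play \<sigma> \<tau> m)))
      \<and> (\<forall>m < k. a_legal p n (play \<sigma> \<tau> m) (\<sigma> (play \<sigma> \<tau> m)) (\<tau> (play \<sigma> \<tau> m) (\<sigma> (play \<sigma> \<tau> m))))
      \<and> \<not> a_legal p n (play \<sigma> \<tau> k) (\<sigma> (play \<sigma> \<tau> k)) (\<tau> (play \<sigma> \<tau> k) (\<sigma> (play \<sigma> \<tau> k))))"

definition prover_wins :: "nat \<Rightarrow> nat \<Rightarrow> nat \<Rightarrow> nat \<Rightarrow> bool" where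
  "prover_wins p d n t \<longleftrightarrow> (\<exists>\<sigma>. winning_strategy p d n t \<sigma>)"

end

theory Submission
  imports Defs
begin

text \<open>For a sequent \<open>\<Gamma> \<rightarrow> \<Delta>\<close> let its formula be \<open>\<Or>\<not>\<Gamma> \<or> \<Or>\<Delta>\<close>, and for the lines
  \<open>P\<^sub>0, \<dots>, P\<^sub>N\<^sub>-\<^sub>1\<close> of a refutation let \<open>C\<^sub>m\<close> be the disjunction of the negated formulas of
  the first m lines. The Liar cannot call \<open>C\<^sub>0\<close> true (it is an empty disjunction) nor
  \<open>C\<^sub>N\<close> false (the last line is the empty sequent). A binary search with questions \<open>C\<^sub>m\<close>
  therefore finds a line a with \<open>C\<^sub>a\<close> false and \<open>C\<^sub>a\<^sub>+\<^sub>1\<close> true, i.e. the Liar calls line a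
  false and all earlier lines true; a constant number of questions about the rule deriving
  line a then exposes him. All questions have depth d + O(1) and size O(s), and there are
  log s + O(1) of them. Variables outside those of the pigeonhole principle are first
  renamed to one of its variables, which leaves the refutation valid.\<close>

section \<open>Winning positions of Prover\<close>

lemma liar_consistent_subset:
  "liar_consistent p n S' \<Longrightarrow> S \<subseteq> S' \<Longrightarrow> liar_consistent p n S"
  unfolding liar_consistent_def subset_iff by (intro conjI allI impI; metis)

lemma not_liar_consistent_True_False:
  "(\<phi>, True) \<in> S \<Longrightarrow> (\<phi>, False) \<in> S \<Longrightarrow> \<not> liar_consistent p n S"
  unfolding liar_consistent_def by auto

lemma not_liar_consistent_Neg:
  "(\<phi>, b) \<in> S \<Longrightarrow> (Neg \<phi>, b) \<in> S \<Longrightarrow> \<not> liar_consistent p n S"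
  unfolding liar_consistent_def by auto

lemma not_liar_consistent_mod_axiom:
  "(\<psi>, False) \<in> S \<Longrightarrow> mod_axiom p \<psi> \<Longrightarrow> \<not> liar_consistent p n S"
  unfolding liar_consistent_def by auto

lemma not_liar_consistent_negPHP:
  "(\<psi>, False) \<in> S \<Longrightarrow> \<psi> \<in> negPHP n \<Longrightarrow> \<not> liar_consistent p n S"
  unfolding liar_consistent_def by auto

lemma stated_Nil: "stated [] = {}"
  by (simp add: stated_def)

lemma stated_snoc: "stated (h @ [x]) = stated h \<union> stmt x"
  by (auto simp: stated_def)

lemma length_play: "length (play \<sigma> \<tau> k) = k"
  by (induction k) auto

locale game =
  fixes p d n t :: nat
begin

definition legal_question :: "(fm \<times> bool) set \<Rightarrow> question \<Rightarrow> bool" where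
  "legal_question S q \<longleftrightarrow>
     (case q of
        Q1 \<phi> \<Rightarrow> admissible p d n t \<phi>
      | Q2a \<phi> j \<Rightarrow> (\<exists>\<phi>s. \<phi> = Disj \<phi>s \<and> (\<phi>, False) \<in> S \<and> j < length \<phi>s
                       \<and> admissible p d n t (\<phi>s ! j))
      | Q2b \<phi> \<Rightarrow> (\<exists>\<phi>s. \<phi> = Disj \<phi>s \<and> (\<phi>, True) \<in> S))"

definition well_formed_answer :: "question \<Rightarrow> answer \<Rightarrow> bool" where
  "well_formed_answer q a \<longleftrightarrow>
     (case (q, a) of
        (Q1 \<phi>, Val b) \<Rightarrow> True
      | (Q2a \<phi> j, Val b) \<Rightarrow> b = False
      | (Q2b \<phi>, Wit j) \<Rightarrow> j < length (args \<phi>)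
      | _ \<Rightarrow> False)"

lemma q_legal_iff: "q_legal p d n t h q \<longleftrightarrow> legal_question (stated h) q"
  unfolding q_legal_def legal_question_def ..

lemma a_legal_iff:
  "a_legal p n h q a \<longleftrightarrow> well_formed_answer q a \<and> liar_consistent p n (stated h \<union> stmt (q, a))"
  unfolding a_legal_def well_formed_answer_def ..

text \<open>Prover wins within m rounds from every position in which the Liar has stated exactly S;
  the rules depend on the history only through what has been stated.\<close>

inductive prover_forces :: "nat \<Rightarrow> (fm \<times> bool) set \<Rightarrow> bool" where
  "legal_question S q \<Longrightarrow>
   (\<And>a. well_formed_answer q a \<Longrightarrow> liar_consistent p n (S \<union> stmt (q, a)) \<Longrightarrow>
         prover_forces m (S \<union> stmt (q, a))) \<Longrightarrow>
   prover_forces (Suc m) S"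

lemma prover_forces_mono: "prover_forces m S \<Longrightarrow> m \<le> m' \<Longrightarrow> prover_forces m' S"
proof (induction arbitrary: m' rule: prover_forces.induct)
  case (1 S q m)
  then obtain m'' where "m' = Suc m''" "m \<le> m''"
    by (cases m') auto
  with 1 show ?case
    by (auto intro: prover_forces.intros)
qed

definition forcing_move :: "history \<Rightarrow> question" where
  "forcing_move h = (SOME q. legal_question (stated h) q \<and>
     (\<forall>a. well_formed_answer q a \<longrightarrow> liar_consistent p n (stated h \<union> stmt (q, a)) \<longrightarrow>
          prover_forces (t - length h - 1) (stated h \<union> stmt (q, a))))"

lemma forcing_move:
  assumes "prover_forces (t - length h) (stated h)"
  shows "length h < t" and "legal_question (stated h) (forcing_move h)"
    and "well_formed_answer (forcing_move h) a \<Longrightarrow>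
         liar_consistent p n (stated h \<union> stmt (forcing_move h, a)) \<Longrightarrow>
         prover_forces (t - length h - 1) (stated h \<union> stmt (forcing_move h, a))"
proof -
  let ?good = "\<lambda>q. legal_question (stated h) q \<and>
     (\<forall>a. well_formed_answer q a \<longrightarrow> liar_consistent p n (stated h \<union> stmt (q, a)) \<longrightarrow>
          prover_forces (t - length h - 1) (stated h \<union> stmt (q, a)))"
  from assms obtain m q where m: "t - length h = Suc m" and "legal_question (stated h) q"
    "\<And>a. well_formed_answer q a \<Longrightarrow> liar_consistent p n (stated h \<union> stmt (q, a)) \<Longrightarrow>
          prover_forces m (stated h \<union> stmt (q, a))"
    by (cases rule: prover_forces.cases) blast
  then have "?good q"
    by simp
  then have "?good (forcing_move h)"
    unfolding forcing_move_def by (rule someI)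
  with m show "length h < t" and "legal_question (stated h) (forcing_move h)"
    and "well_formed_answer (forcing_move h) a \<Longrightarrow>
         liar_consistent p n (stated h \<union> stmt (forcing_move h, a)) \<Longrightarrow>
         prover_forces (t - length h - 1) (stated h \<union> stmt (forcing_move h, a))"
    by simp_all
qed

theorem prover_wins_if_forces:
  assumes "prover_forces t {}"
  shows "prover_wins p d n t"
  unfolding prover_wins_def winning_strategy_def
proof (intro exI[of _ forcing_move] allI)
  fix \<tau>
  let ?h = "play forcing_move \<tau>"
  let ?legal = "\<lambda>m. a_legal p n (?h m) (forcing_move (?h m)) (\<tau> (?h m) (forcing_move (?h m)))"
  have invariant: "prover_forces (t - k) (stated (?h k))" if "\<forall>m<k. ?legal m" for k
    using that
  proof (induction k)
    case 0
    then show ?case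
      using assms by (simp add: stated_Nil)
  next
    case (Suc k)
    then show ?case
      using forcing_move(3)[of "?h k"] by (simp add: a_legal_iff stated_snoc length_play)
  qed
  have round_bound: "k < t" if "\<forall>m<k. ?legal m" for k
    using forcing_move(1)[of "?h k"] invariant[OF that] by (simp add: length_play)
  obtain k where k: "\<not> ?legal k" "\<forall>m<k. ?legal m"
    using exists_least_iff[of "\<lambda>k. \<not> ?legal k"] round_bound[of t] by blast
  have "q_legal p d n t (?h m) (forcing_move (?h m))" if "m \<le> k" for m
    using forcing_move(2) invariant[of m] k(2) that by (simp add: q_legal_iff length_play)
  then show "\<exists>k<t. (\<forall>m\<le>k. q_legal p d n t (?h m) (forcing_move (?h m))) \<and>
      (\<forall>m<k. ?legal m) \<and> \<not> ?legal k"
    using k round_bound by blast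
qed

lemma forces_question:
  assumes "m < m'" and "legal_question S q"
    and "\<And>a. well_formed_answer q a \<Longrightarrow> liar_consistent p n (S \<union> stmt (q, a)) \<Longrightarrow>
              prover_forces m (S \<union> stmt (q, a))"
  shows "prover_forces m' S"
  using prover_forces.intros[OF assms(2,3)] assms(1) prover_forces_mono Suc_leI by blast

lemma forces_ask:
  assumes "m < m'" and "admissible p d n t \<phi>"
    and "\<And>b. liar_consistent p n (insert (\<phi>, b) S) \<Longrightarrow> prover_forces m (insert (\<phi>, b) S)"
  shows "prover_forces m' S"
proof (rule forces_question[OF assms(1)])
  show "legal_question S (Q1 \<phi>)"
    using assms(2) by (simp add: legal_question_def)
  fix a assume "well_formed_answer (Q1 \<phi>) a" "liar_consistent p n (S \<union> stmt (Q1 \<phi>, a))"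
  then show "prover_forces m (S \<union> stmt (Q1 \<phi>, a))"
    using assms(3) by (cases a) (auto simp: well_formed_answer_def)
qed

lemma forces_deny_disjunct:
  assumes "m < m'" and "(Disj \<phi>s, False) \<in> S" "\<phi> \<in> set \<phi>s" "admissible p d n t \<phi>"
    and "liar_consistent p n (insert (\<phi>, False) S) \<Longrightarrow> prover_forces m (insert (\<phi>, False) S)"
  shows "prover_forces m' S"
proof -
  obtain j where j: "j < length \<phi>s" "\<phi>s ! j = \<phi>"
    using assms(3) by (auto simp: in_set_conv_nth)
  show ?thesis
  proof (rule forces_question[OF assms(1)])
    show "legal_question S (Q2a (Disj \<phi>s) j)"
      using assms(2,4) j by (simp add: legal_question_def)
    fix a assume "well_formed_answer (Q2a (Disj \<phi>s) j) a"
      "liar_consistent p n (S \<union> stmt (Q2a (Disj \<phi>s) j, a))"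
    then show "prover_forces m (S \<union> stmt (Q2a (Disj \<phi>s) j, a))"
      using assms(5) j by (cases a) (auto simp: well_formed_answer_def)
  qed
qed

lemma forces_inconsistent_denial:
  assumes "0 < m" and "(Disj \<phi>s, False) \<in> S" "\<phi> \<in> set \<phi>s" "admissible p d n t \<phi>"
    and "\<not> liar_consistent p n (insert (\<phi>, False) S)"
  shows "prover_forces m S"
  using forces_deny_disjunct[OF assms(1-4)] assms(5) by blast

lemma forces_witness:
  assumes "m < m'" and "(Disj \<phi>s, True) \<in> S"
    and "\<And>\<phi>. \<phi> \<in> set \<phi>s \<Longrightarrow> liar_consistent p n (insert (\<phi>, True) S) \<Longrightarrow>
              prover_forces m (insert (\<phi>, True) S)"
  shows "prover_forces m' S"
proof (rule forces_question[OF assms(1)])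
  show "legal_question S (Q2b (Disj \<phi>s))"
    using assms(2) by (simp add: legal_question_def)
  fix a assume "well_formed_answer (Q2b (Disj \<phi>s)) a"
    "liar_consistent p n (S \<union> stmt (Q2b (Disj \<phi>s), a))"
  then show "prover_forces m (S \<union> stmt (Q2b (Disj \<phi>s), a))"
    using assms(3) by (cases a) (auto simp: well_formed_answer_def)
qed

lemma forces_Disj_Nil_True: "0 < m \<Longrightarrow> (Disj [], True) \<in> S \<Longrightarrow> prover_forces m S"
  by (rule forces_witness) auto

lemma forces_ask_under_Neg:
  assumes "m < m'" and "(Neg \<phi>, \<not> b) \<in> S" "admissible p d n t \<phi>"
    and "liar_consistent p n (insert (\<phi>, b) S) \<Longrightarrow> prover_forces m (insert (\<phi>, b) S)"
  shows "prover_forces m' S"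
proof (rule forces_ask[OF assms(1,3)])
  fix c assume "liar_consistent p n (insert (\<phi>, c) S)"
  moreover from this have "c = b"
    using assms(2) not_liar_consistent_Neg[of \<phi> "\<not> b" "insert (\<phi>, c) S"] by (cases c) auto
  ultimately show "prover_forces m (insert (\<phi>, c) S)"
    using assms(4) by simp
qed

end

section \<open>Depth and admissibility of subformulas\<close>

lemma foldr_max_le: "(\<forall>x\<in>set xs. x \<le> k) \<Longrightarrow> foldr max xs (0::nat) \<le> k"
  by (induction xs) auto

lemma le_foldr_max: "x \<in> set xs \<Longrightarrow> x \<le> foldr max xs (0::nat)"
  by (induction xs) auto

lemma dp_le_depth: "dp c f \<le> depth f"
  unfolding depth_def by (cases f) auto

lemma depth_le_Suc_dp: "depth f \<le> Suc (dp c f)"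
  unfolding depth_def by (cases f) auto

lemma depth_le_depth_Neg: "depth \<phi> \<le> depth (Neg \<phi>)"
  using depth_le_Suc_dp[of \<phi> "Some CNeg"] by (simp add: depth_def)

lemma depth_le_depth_Disj: "\<phi> \<in> set \<phi>s \<Longrightarrow> depth \<phi> \<le> depth (Disj \<phi>s)"
  using le_foldr_max[of "dp (Some COr) \<phi>" "map (dp (Some COr)) \<phi>s"]
    depth_le_Suc_dp[of \<phi> "Some COr"]
  by (simp add: depth_def)

lemma depth_Neg_le: "depth (Neg \<phi>) \<le> Suc (depth \<phi>)"
  using dp_le_depth[of "Some CNeg" \<phi>] by (simp add: depth_def)

lemma depth_Disj_le: "(\<forall>\<phi>\<in>set \<phi>s. depth \<phi> \<le> k) \<Longrightarrow> depth (Disj \<phi>s) \<le> Suc k"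
proof -
  assume "\<forall>\<phi>\<in>set \<phi>s. depth \<phi> \<le> k"
  then have "foldr max (map (dp (Some COr)) \<phi>s) 0 \<le> k"
    using dp_le_depth[of "Some COr"] by (intro foldr_max_le) (auto intro: order_trans)
  then show ?thesis by (simp add: depth_def)
qed

lemma admissible_Neg_arg: "admissible p d n t (Neg \<phi>) \<Longrightarrow> admissible p d n t \<phi>"
  using depth_le_depth_Neg[of \<phi>] by (auto simp: admissible_def)

lemma admissible_Disj_arg:
  "admissible p d n t (Disj \<phi>s) \<Longrightarrow> \<phi> \<in> set \<phi>s \<Longrightarrow> admissible p d n t \<phi>"
  using depth_le_depth_Disj[of \<phi> \<phi>s] member_le_sum_list[of "fsize \<phi>" "map fsize \<phi>s"]
  by (auto simp: admissible_def)

section \<open>Renaming variables\<close>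

text \<open>A refutation may mention variables outside php_vars n, about which Prover may not
  ask; renaming them all to the PHP variable (1,1) keeps it a refutation of the same size.\<close>

fun restrict_vars :: "(nat \<times> nat) set \<Rightarrow> fm \<Rightarrow> fm" where
  "restrict_vars V (Var v) = (if v \<in> V then Var v else Var (1, 1))"
| "restrict_vars V (Neg f) = Neg (restrict_vars V f)"
| "restrict_vars V (Disj fs) = Disj (map (restrict_vars V) fs)"
| "restrict_vars V (Mod i fs) = Mod i (map (restrict_vars V) fs)"

lemma dp_restrict_vars: "dp c (restrict_vars V f) = dp c f"
  by (induction f arbitrary: c) (simp_all add: comp_def cong: map_cong)

lemma depth_restrict_vars: "depth (restrict_vars V f) = depth f"
  by (simp add: depth_def dp_restrict_vars)

lemma fsize_restrict_vars: "fsize (restrict_vars V f) = fsize f"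
  by (induction f) (simp_all add: comp_def cong: map_cong)

lemma wf_restrict_vars: "wf p (restrict_vars V f) = wf p f"
  by (induction f) auto

lemma fvars_restrict_vars: "fvars (restrict_vars V f) \<subseteq> insert (1, 1) V"
  by (induction f) auto

lemma restrict_vars_id: "fvars f \<subseteq> V \<Longrightarrow> restrict_vars V f = f"
  by (induction f) (auto intro: map_idI)

lemma mod_axiom_restrict_vars: "mod_axiom p \<psi> \<Longrightarrow> mod_axiom p (restrict_vars V \<psi>)"
  unfolding mod_axiom_def Iff_def Conj2_def by fastforce

definition restrict_seq :: "(nat \<times> nat) set \<Rightarrow> sequent \<Rightarrow> sequent" where
  "restrict_seq V S = (map (restrict_vars V) (fst S), map (restrict_vars V) (snd S))"

lemma seq_fms_restrict_seq: "seq_fms (restrict_seq V S) = restrict_vars V ` seq_fms S"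
  by (auto simp: restrict_seq_def seq_fms_def)

lemma seq_size_restrict_seq: "seq_size (restrict_seq V S) = seq_size S"
  by (simp add: seq_size_def restrict_seq_def comp_def fsize_restrict_vars)

lemma proof_size_restrict_seq: "proof_size (map (restrict_seq V) P) = proof_size P"
  by (simp add: proof_size_def comp_def seq_size_restrict_seq)

lemma lk_rule_restrict_seq:
  "lk_rule ps S \<Longrightarrow> lk_rule (map (restrict_seq V) ps) (restrict_seq V S)"
proof (induction rule: lk_rule.induct)
  case (disjL G D \<phi>s)
  then show ?case
    using lk_rule.disjL[of "map (restrict_vars V) G" "map (restrict_vars V) D"
        "map (restrict_vars V) \<phi>s"]
    by (simp add: restrict_seq_def comp_def)
qed (simp_all add: restrict_seq_def lk_rule.intros)

lemma initial_seq_restrict_seq: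
  assumes "initial_seq p (negPHP n) S"
  shows "initial_seq p (negPHP n) (restrict_seq (php_vars n) S)"
proof -
  have "restrict_vars (php_vars n) \<psi> = \<psi>" if "\<psi> \<in> negPHP n" for \<psi>
    using that by (intro restrict_vars_id) (auto simp: negPHP_def php_vars_def)
  then show ?thesis
    using assms mod_axiom_restrict_vars
    by (auto simp: initial_seq_def restrict_seq_def)
qed

section \<open>Binary search along a refutation\<close>

definition sequent_disjuncts :: "sequent \<Rightarrow> fm list" where
  "sequent_disjuncts S = map Neg (fst S) @ snd S"

definition sequent_fm :: "sequent \<Rightarrow> fm" where
  "sequent_fm S = Disj (sequent_disjuncts S)"

definition some_line_false :: "sequent list \<Rightarrow> nat \<Rightarrow> fm" where
  "some_line_false P m = Disj (map (\<lambda>i. Neg (sequent_fm (P ! i))) [0..<m])"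

lemma set_sequent_disjuncts [simp]:
  "set (sequent_disjuncts (G, D)) = Neg ` set G \<union> set D"
  by (simp add: sequent_disjuncts_def)

locale refutation_game = game +
  fixes P :: "sequent list"
  assumes P_nonempty: "P \<noteq> []"
    and last_P: "last P = ([], [])"
    and line_justified: "\<And>k. k < length P \<Longrightarrow> initial_seq p (negPHP n) (P ! k) \<or>
           (\<exists>ps. set ps \<subseteq> set (take k P) \<and> lk_rule ps (P ! k))"
    and admissible_some_line_false:
          "\<And>m. m \<le> length P \<Longrightarrow> admissible p d n t (some_line_false P m)"
begin

lemma admissible_Neg_line: "i < length P \<Longrightarrow> admissible p d n t (Neg (sequent_fm (P ! i)))"
  using admissible_some_line_false[of "length P"]
  by (auto simp: some_line_false_def intro: admissible_Disj_arg)

lemma admissible_line: "i < length P \<Longrightarrow> admissible p d n t (sequent_fm (P ! i))"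
  using admissible_Neg_line admissible_Neg_arg by blast

lemma admissible_disjunct:
  "Q \<in> set P \<Longrightarrow> e \<in> set (sequent_disjuncts Q) \<Longrightarrow> admissible p d n t e"
  using admissible_line admissible_Disj_arg unfolding sequent_fm_def in_set_conv_nth by blast

definition first_false_line :: "nat \<Rightarrow> (fm \<times> bool) set \<Rightarrow> bool" where
  "first_false_line a S \<longleftrightarrow> a < length P \<and> (some_line_false P a, False) \<in> S
     \<and> (sequent_fm (P ! a), False) \<in> S"

lemma first_false_line_insert:
  "first_false_line a S \<Longrightarrow> first_false_line a (insert x S)"
  by (simp add: first_false_line_def)

lemma first_false_line_disjuncts:
  assumes "first_false_line a S"
  shows "(Disj (sequent_disjuncts (P ! a)), False) \<in> S"
    and "e \<in> set (sequent_disjuncts (P ! a)) \<Longrightarrow> admissible p d n t e"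
  using assms admissible_disjunct[of "P ! a" e] by (auto simp: first_false_line_def sequent_fm_def)

text \<open>Prover makes the Liar defend an earlier line Q, which he has implicitly called true: the
  Liar must name a true disjunct of Q, which is either a disjunct of the false line a or
  contradicts what he has said.\<close>

lemma forces_by_premise:
  assumes a: "first_false_line a S" and Q: "Q \<in> set (take a P)"
    and covered: "\<forall>e\<in>set (sequent_disjuncts Q).
       e \<in> set (sequent_disjuncts (P ! a)) \<or> \<not> liar_consistent p n (insert (e, True) S)"
  shows "prover_forces 4 S"
proof -
  obtain i where i: "i < a" "P ! i = Q"
    using Q by (auto simp: in_set_conv_nth)
  have "Q \<in> set P"
    using Q in_set_takeD by fast
  show ?thesis
  proof (rule forces_deny_disjunct[of 3])
    show "(Disj (map (\<lambda>i. Neg (sequent_fm (P ! i))) [0..<a]), False) \<in> S"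
      using a by (simp add: first_false_line_def some_line_false_def)
    show "Neg (sequent_fm Q) \<in> set (map (\<lambda>i. Neg (sequent_fm (P ! i))) [0..<a])"
      using i by force
    show "admissible p d n t (Neg (sequent_fm Q))"
      using a i admissible_Neg_line by (auto simp: first_false_line_def)
    let ?S1 = "insert (Neg (sequent_fm Q), False) S"
    show "prover_forces 3 ?S1"
    proof (rule forces_ask_under_Neg[of 2])
      show "(Neg (sequent_fm Q), \<not> True) \<in> ?S1"
        by simp
      show "admissible p d n t (sequent_fm Q)"
        using \<open>admissible p d n t (Neg (sequent_fm Q))\<close> by (rule admissible_Neg_arg)
      let ?S2 = "insert (sequent_fm Q, True) ?S1"
      show "prover_forces 2 ?S2"
      proof (rule forces_witness[of 1])
        show "(Disj (sequent_disjuncts Q), True) \<in> ?S2"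
          by (simp add: sequent_fm_def)
        fix e assume e: "e \<in> set (sequent_disjuncts Q)"
          and consistent: "liar_consistent p n (insert (e, True) ?S2)"
        then have "e \<in> set (sequent_disjuncts (P ! a))"
          using covered liar_consistent_subset[OF consistent] by blast
        then show "prover_forces 1 (insert (e, True) ?S2)"
          using first_false_line_disjuncts[OF a] not_liar_consistent_True_False[of e]
          by (intro forces_inconsistent_denial[of _ "sequent_disjuncts (P ! a)"]) auto
      qed simp
    qed simp
  qed simp
qed

lemma forces_initial_line:
  assumes a: "first_false_line a S" and "initial_seq p (negPHP n) (P ! a)"
  shows "prover_forces 2 S"
proof -
  note line_false = first_false_line_disjuncts(1)[OF a]
    and adm = first_false_line_disjuncts(2)[OF a]
  from assms(2) consider (axiom) \<phi> where "P ! a = ([\<phi>], [\<phi>])"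
    | (mod_axiom) \<psi> where "mod_axiom p \<psi>" "P ! a = ([], [\<psi>])"
    | (negPHP) \<psi> where "\<psi> \<in> negPHP n" "P ! a = ([], [\<psi>])"
    unfolding initial_seq_def by blast
  then show ?thesis
  proof cases
    case axiom
    show ?thesis
    proof (rule forces_deny_disjunct[of 1 _ _ _ "Neg \<phi>", OF _ line_false])
      show "prover_forces 1 (insert (Neg \<phi>, False) S)"
        using axiom line_false adm not_liar_consistent_Neg[of \<phi> False]
        by (intro forces_inconsistent_denial[of _ _ _ \<phi>]) auto
    qed (use axiom adm in auto)
  next
    case mod_axiom
    then show ?thesis
      using line_false adm not_liar_consistent_mod_axiom[of \<psi>]
      by (intro forces_inconsistent_denial[of _ _ _ \<psi>]) auto
  next
    case negPHP
    then show ?thesis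
      using line_false adm not_liar_consistent_negPHP[of \<psi>]
      by (intro forces_inconsistent_denial[of _ _ _ \<psi>]) auto
  qed
qed

lemma forces_cut:
  assumes a: "first_false_line a S"
    and prems: "(G, D @ [\<phi>]) \<in> set (take a P)" "(\<phi> # G, D) \<in> set (take a P)"
    and "P ! a = (G, D)"
  shows "prover_forces 5 S"
proof (rule forces_ask[of 4])
  show "admissible p d n t \<phi>"
    using prems(1) by (intro admissible_disjunct[of "(G, D @ [\<phi>])"]) (auto dest: in_set_takeD)
  fix b
  show "prover_forces 4 (insert (\<phi>, b) S)"
  proof (cases b)
    case True
    then show ?thesis
      using assms not_liar_consistent_Neg[of \<phi> True]
      by (intro forces_by_premise[of a _ "(\<phi> # G, D)"]) (auto intro: first_false_line_insert)
  next
    case False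
    then show ?thesis
      using assms not_liar_consistent_True_False[of \<phi>]
      by (intro forces_by_premise[of a _ "(G, D @ [\<phi>])"]) (auto intro: first_false_line_insert)
  qed
qed simp

lemma forces_negL:
  assumes a: "first_false_line a S"
    and "(G, D @ [\<phi>]) \<in> set (take a P)" "P ! a = (Neg \<phi> # G, D)"
  shows "prover_forces 7 S"
proof -
  have adm: "admissible p d n t (Neg (Neg \<phi>))"
    using first_false_line_disjuncts(2)[OF a] assms(3) by simp
  show ?thesis
  proof (rule forces_deny_disjunct[of 6 _ _ _ "Neg (Neg \<phi>)"])
    let ?S1 = "insert (Neg (Neg \<phi>), False) S"
    show "prover_forces 6 ?S1"
    proof (rule forces_ask_under_Neg[of 5 _ "Neg \<phi>"])
      let ?S2 = "insert (Neg \<phi>, True) ?S1"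
      show "prover_forces 5 ?S2"
      proof (rule forces_ask_under_Neg[of 4 _ \<phi>])
        show "prover_forces 4 (insert (\<phi>, False) ?S2)"
          using assms not_liar_consistent_True_False[of \<phi>]
          by (intro forces_by_premise[of a _ "(G, D @ [\<phi>])"]) (auto intro: first_false_line_insert)
      qed (use adm admissible_Neg_arg in auto)
    qed (use adm admissible_Neg_arg in auto)
  qed (use first_false_line_disjuncts(1)[OF a] adm assms(3) in auto)
qed

lemma forces_disjL:
  assumes a: "first_false_line a S"
    and "\<forall>\<phi>\<in>set \<phi>s. (\<phi> # G, D) \<in> set (take a P)" "P ! a = (Disj \<phi>s # G, D)"
  shows "prover_forces 7 S"
proof -
  have adm: "admissible p d n t (Neg (Disj \<phi>s))"
    using first_false_line_disjuncts(2)[OF a] assms(3) by simp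
  show ?thesis
  proof (rule forces_deny_disjunct[of 6 _ _ _ "Neg (Disj \<phi>s)"])
    let ?S1 = "insert (Neg (Disj \<phi>s), False) S"
    show "prover_forces 6 ?S1"
    proof (rule forces_ask_under_Neg[of 5 _ "Disj \<phi>s"])
      let ?S2 = "insert (Disj \<phi>s, True) ?S1"
      show "prover_forces 5 ?S2"
      proof (rule forces_witness[of 4])
        fix \<phi> assume "\<phi> \<in> set \<phi>s"
        then show "prover_forces 4 (insert (\<phi>, True) ?S2)"
          using assms not_liar_consistent_Neg[of \<phi> True]
          by (intro forces_by_premise[of a _ "(\<phi> # G, D)"]) (auto intro: first_false_line_insert)
      qed simp_all
    qed (use adm admissible_Neg_arg in auto)
  qed (use first_false_line_disjuncts(1)[OF a] adm assms(3) in auto)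
qed

lemma forces_disjR:
  assumes a: "first_false_line a S"
    and "(G, D @ [\<phi>]) \<in> set (take a P)" "\<phi> \<in> set \<phi>s" "P ! a = (G, D @ [Disj \<phi>s])"
  shows "prover_forces 6 S"
proof -
  have adm: "admissible p d n t (Disj \<phi>s)"
    using first_false_line_disjuncts(2)[OF a] assms(4) by simp
  show ?thesis
  proof (rule forces_deny_disjunct[of 5 _ _ _ "Disj \<phi>s"])
    let ?S1 = "insert (Disj \<phi>s, False) S"
    show "prover_forces 5 ?S1"
    proof (rule forces_deny_disjunct[of 4 _ \<phi>s _ \<phi>])
      show "prover_forces 4 (insert (\<phi>, False) ?S1)"
        using assms not_liar_consistent_True_False[of \<phi>]
        by (intro forces_by_premise[of a _ "(G, D @ [\<phi>])"]) (auto intro: first_false_line_insert)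
    qed (use adm assms(3) admissible_Disj_arg in auto)
  qed (use first_false_line_disjuncts(1)[OF a] adm assms(4) in auto)
qed

text \<open>In the remaining rules, including \<open>\<not>\<close>:right, every disjunct of the premise is
  already one of the conclusion.\<close>

lemma forces_derived_line:
  assumes a: "first_false_line a S" and earlier: "set ps \<subseteq> set (take a P)"
    and rule: "lk_rule ps (P ! a)"
  shows "prover_forces 7 S"
proof -
  have by_subsumed_premise: "prover_forces 7 S"
    if "Q \<in> set ps" "set (sequent_disjuncts Q) \<subseteq> set (sequent_disjuncts (P ! a))" for Q
    using forces_by_premise[OF a, of Q] that earlier prover_forces_mono[of 4 S 7] by auto
  from rule show ?thesis
  proof (cases rule: lk_rule.cases)
    case cut
    then have "prover_forces 5 S"
      using earlier by (intro forces_cut[OF a]) auto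
    then show ?thesis
      by (rule prover_forces_mono) simp
  next
    case negL
    then show ?thesis
      using forces_negL[OF a] earlier by simp
  next
    case disjL
    then show ?thesis
      using forces_disjL[OF a] earlier by auto
  next
    case disjR
    then have "prover_forces 6 S"
      using earlier by (intro forces_disjR[OF a]) auto
    then show ?thesis
      by (rule prover_forces_mono) simp
  qed (rule by_subsumed_premise[of "hd ps"], auto)+
qed

lemma forces_first_false_line:
  assumes "first_false_line a S"
  shows "prover_forces 7 S"
proof -
  have "a < length P"
    using assms by (simp add: first_false_line_def)
  then consider "initial_seq p (negPHP n) (P ! a)"
    | ps where "set ps \<subseteq> set (take a P)" "lk_rule ps (P ! a)"
    using line_justified by blast
  then show ?thesis
  proof cases
    case 1
    then show ?thesis
      using forces_initial_line[OF assms] prover_forces_mono[of 2 S 7] by simp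
  next
    case 2
    then show ?thesis
      by (rule forces_derived_line[OF assms])
  qed
qed

lemma forces_at_boundary:
  assumes "a < length P" "(some_line_false P a, False) \<in> S"
    and "(some_line_false P (Suc a), True) \<in> S"
  shows "prover_forces 9 S"
proof (rule forces_witness[of 8])
  show "(Disj (map (\<lambda>i. Neg (sequent_fm (P ! i))) [0..<Suc a]), True) \<in> S"
    using assms(3) by (simp add: some_line_false_def)
  fix \<phi> assume "\<phi> \<in> set (map (\<lambda>i. Neg (sequent_fm (P ! i))) [0..<Suc a])"
  then obtain j where j: "j < Suc a" "\<phi> = Neg (sequent_fm (P ! j))"
    by (auto simp del: upt_Suc)
  show "prover_forces 8 (insert (\<phi>, True) S)"
  proof (cases "j < a")
    case True
    show ?thesis
    proof (rule forces_inconsistent_denial[of _ "map (\<lambda>i. Neg (sequent_fm (P ! i))) [0..<a]"])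
      show "(Disj (map (\<lambda>i. Neg (sequent_fm (P ! i))) [0..<a]), False) \<in> insert (\<phi>, True) S"
        using assms(2) by (simp add: some_line_false_def)
      show "\<phi> \<in> set (map (\<lambda>i. Neg (sequent_fm (P ! i))) [0..<a])"
        using True j by simp
      show "admissible p d n t \<phi>"
        using True j assms(1) admissible_Neg_line by simp
      show "\<not> liar_consistent p n (insert (\<phi>, False) (insert (\<phi>, True) S))"
        by (rule not_liar_consistent_True_False[of \<phi>]) simp_all
    qed simp
  next
    case False
    show ?thesis
    proof (rule forces_ask_under_Neg[of 7 _ "sequent_fm (P ! a)" False])
      show "(Neg (sequent_fm (P ! a)), \<not> False) \<in> insert (\<phi>, True) S"
        using False j by (simp add: less_Suc_eq)
      show "admissible p d n t (sequent_fm (P ! a))"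
        using assms(1) by (rule admissible_line)
      show "prover_forces 7 (insert (sequent_fm (P ! a), False) (insert (\<phi>, True) S))"
        by (rule forces_first_false_line[of a]) (use assms in \<open>simp add: first_false_line_def\<close>)
    qed simp
  qed
qed simp

lemma forces_binary_search:
  "a < b \<Longrightarrow> b \<le> length P \<Longrightarrow> b - a \<le> 2 ^ r \<Longrightarrow> (some_line_false P a, False) \<in> S \<Longrightarrow>
    (some_line_false P b, True) \<in> S \<Longrightarrow> prover_forces (r + 9) S"
proof (induction r arbitrary: a b S)
  case 0
  then have "b = Suc a"
    by simp
  with 0 show ?case
    using forces_at_boundary[of a S] by simp
next
  case (Suc r)
  define m where "m = (a + b) div 2"
  show ?case
  proof (cases "b - a \<le> 2 ^ r")
    case True
    then show ?thesis
      using Suc prover_forces_mono[of "r + 9"] by simp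
  next
    case False
    then have m: "a < m" "m < b" "m - a \<le> 2 ^ r" "b - m \<le> 2 ^ r"
      using Suc.prems(1,3) by (auto simp: m_def)
    show ?thesis
    proof (rule forces_ask[of "r + 9"])
      show "admissible p d n t (some_line_false P m)"
        using m Suc.prems(2) by (intro admissible_some_line_false) simp
      fix c
      show "prover_forces (r + 9) (insert (some_line_false P m, c) S)"
        using Suc.IH[of a m] Suc.IH[of m b] m Suc.prems by (cases c) auto
    qed simp
  qed
qed

lemma forces_all_lines_true:
  assumes "(some_line_false P (length P), False) \<in> S"
  shows "prover_forces 3 S"
proof -
  let ?last = "sequent_fm (P ! (length P - 1))"
  have N: "0 < length P"
    using P_nonempty by simp
  have last_line: "?last = Disj []"
    using last_P P_nonempty by (simp add: last_conv_nth sequent_fm_def sequent_disjuncts_def)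
  show ?thesis
  proof (rule forces_deny_disjunct[of 2 _ _ _ "Neg ?last"])
    show "(Disj (map (\<lambda>i. Neg (sequent_fm (P ! i))) [0..<length P]), False) \<in> S"
      using assms by (simp add: some_line_false_def)
    show "Neg ?last \<in> set (map (\<lambda>i. Neg (sequent_fm (P ! i))) [0..<length P])"
      using N by simp
    show "admissible p d n t (Neg ?last)"
      using N by (intro admissible_Neg_line) simp
    show "prover_forces 2 (insert (Neg ?last, False) S)"
    proof (rule forces_ask_under_Neg[of 1 _ ?last True])
      show "admissible p d n t ?last"
        using N by (intro admissible_line) simp
      show "prover_forces 1 (insert (?last, True) (insert (Neg ?last, False) S))"
        unfolding last_line by (rule forces_Disj_Nil_True) simp_all
    qed simp_all
  qed simp
qed

lemma forces_refutation:
  assumes "length P \<le> 2 ^ r"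
  shows "prover_forces (r + 11) {}"
proof (rule forces_ask[of "r + 10"])
  show "admissible p d n t (some_line_false P 0)"
    by (rule admissible_some_line_false) simp
  fix c
  show "prover_forces (r + 10) (insert (some_line_false P 0, c) {})"
  proof (cases c)
    case True
    then show ?thesis
      by (intro forces_Disj_Nil_True) (simp_all add: some_line_false_def)
  next
    case False
    then have "c = False"
      by simp
    show ?thesis
      unfolding \<open>c = False\<close>
    proof (rule forces_ask[of "r + 9"])
      show "admissible p d n t (some_line_false P (length P))"
        by (rule admissible_some_line_false) simp
      fix c'
      show "prover_forces (r + 9) (insert (some_line_false P (length P), c')
          {(some_line_false P 0, False)})"
      proof (cases c')
        case True
        then show ?thesis
          using P_nonempty assms by (intro forces_binary_search[of 0 "length P"]) auto
      next
        case False
        then show ?thesis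
          using forces_all_lines_true prover_forces_mono[of 3 _ "r + 9"] by simp
      qed
    qed simp
  qed
qed simp

end

section \<open>Size and depth of the questions\<close>

lemma fsize_pos: "1 \<le> fsize f"
  by (cases f) auto

lemma fsize_sequent_fm: "fsize (sequent_fm S) \<le> 2 * seq_size S"
proof -
  have "(\<Sum>\<phi>\<leftarrow>fst S. Suc (fsize \<phi>)) \<le> (\<Sum>\<phi>\<leftarrow>fst S. 2 * fsize \<phi>)"
    using fsize_pos by (intro sum_list_mono) (simp add: Suc_le_eq)
  then show ?thesis
    by (simp add: sequent_fm_def sequent_disjuncts_def seq_size_def comp_def sum_list_const_mult)
qed

lemma fsize_some_line_false:
  assumes "m \<le> length P"
  shows "fsize (some_line_false P m) \<le> 1 + 3 * proof_size P"
proof -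
  have "fsize (some_line_false P m) = 1 + (\<Sum>i<m. 1 + fsize (sequent_fm (P ! i)))"
    by (simp add: some_line_false_def comp_def sum_list_sum_nth atLeast0LessThan)
  also have "\<dots> \<le> 1 + (\<Sum>i<m. 3 * seq_size (P ! i))"
  proof -
    have "1 + fsize (sequent_fm S) \<le> 3 * seq_size S" for S
      using fsize_sequent_fm[of S] by (simp add: seq_size_def)
    then show ?thesis
      by (intro add_left_mono sum_mono)
  qed
  also have "\<dots> \<le> 1 + (\<Sum>i<length P. 3 * seq_size (P ! i))"
    using assms by (intro add_left_mono sum_mono2) auto
  also have "\<dots> = 1 + 3 * proof_size P"
    by (simp add: proof_size_def sum_list_sum_nth atLeast0LessThan sum_distrib_left)
  finally show ?thesis .
qed

lemma length_le_proof_size: "length P \<le> proof_size P"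
  by (induction P) (auto simp: proof_size_def seq_size_def)

lemma depth_sequent_fm:
  assumes "\<forall>\<phi>\<in>seq_fms S. depth \<phi> \<le> k"
  shows "depth (sequent_fm S) \<le> k + 2"
proof -
  have "depth \<psi> \<le> Suc k" if "\<psi> \<in> set (sequent_disjuncts S)" for \<psi>
  proof -
    from that consider \<phi> where "\<phi> \<in> set (fst S)" "\<psi> = Neg \<phi>" | "\<psi> \<in> set (snd S)"
      by (auto simp: sequent_disjuncts_def)
    then show ?thesis
    proof cases
      case 1
      then have "depth \<phi> \<le> k"
        using assms by (simp add: seq_fms_def)
      then show ?thesis
        using 1 depth_Neg_le[of \<phi>] by simp
    next
      case 2
      then have "depth \<psi> \<le> k"
        using assms by (simp add: seq_fms_def)
      then show ?thesis
        by simp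
    qed
  qed
  then show ?thesis
    unfolding sequent_fm_def using depth_Disj_le[of "sequent_disjuncts S" "Suc k"] by simp
qed

lemma depth_some_line_false:
  assumes "\<forall>i<m. \<forall>\<phi>\<in>seq_fms (P ! i). depth \<phi> \<le> k"
  shows "depth (some_line_false P m) \<le> k + 4"
proof -
  have "depth (Neg (sequent_fm (P ! i))) \<le> k + 3" if "i < m" for i
  proof -
    have "depth (sequent_fm (P ! i)) \<le> k + 2"
      using assms that by (intro depth_sequent_fm) simp
    then show ?thesis
      using depth_Neg_le[of "sequent_fm (P ! i)"] by simp
  qed
  then show ?thesis
    unfolding some_line_false_def
    using depth_Disj_le[of "map (\<lambda>i. Neg (sequent_fm (P ! i))) [0..<m]" "k + 3"] by simp
qed

lemma wf_some_line_false:
  "\<forall>i<m. \<forall>\<phi>\<in>seq_fms (P ! i). wf p \<phi> \<Longrightarrow> wf p (some_line_false P m)"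
  by (auto simp: some_line_false_def sequent_fm_def sequent_disjuncts_def seq_fms_def)

lemma fvars_some_line_false:
  "\<forall>i<m. \<forall>\<phi>\<in>seq_fms (P ! i). fvars \<phi> \<subseteq> V \<Longrightarrow> fvars (some_line_false P m) \<subseteq> V"
  by (fastforce simp: some_line_false_def sequent_fm_def sequent_disjuncts_def seq_fms_def)

lemma refutation_size_ge_2:
  assumes "lk_refutation p d \<Sigma> P"
  shows "2 \<le> proof_size P"
proof (rule ccontr)
  assume "\<not> 2 \<le> proof_size P"
  then have "length P \<le> 1"
    using length_le_proof_size[of P] by simp
  moreover have "P \<noteq> []" "last P = ([], [])"
    using assms by (auto simp: lk_refutation_def)
  ultimately have "P = [([], [])]"
    by (cases P) auto
  moreover have "\<forall>k<length P. initial_seq p \<Sigma> (P ! k) \<or>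
      (\<exists>ps. set ps \<subseteq> set (take k P) \<and> lk_rule ps (P ! k))"
    using assms by (simp add: lk_refutation_def)
  ultimately have "lk_rule [] ([], [])"
    by (auto simp: initial_seq_def)
  then show False
    by (cases rule: lk_rule.cases)
qed

lemma restrict_seq_line_justified:
  assumes "lk_refutation p d (negPHP n) P" "k < length P"
  shows "initial_seq p (negPHP n) (restrict_seq (php_vars n) (P ! k)) \<or>
    (\<exists>ps. set ps \<subseteq> set (take k (map (restrict_seq (php_vars n)) P)) \<and>
          lk_rule ps (restrict_seq (php_vars n) (P ! k)))"
proof -
  from assms consider "initial_seq p (negPHP n) (P ! k)"
    | ps where "set ps \<subseteq> set (take k P)" "lk_rule ps (P ! k)"
    by (auto simp: lk_refutation_def)
  then show ?thesis
  proof cases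
    case 1
    then show ?thesis
      using initial_seq_restrict_seq by simp
  next
    case (2 ps)
    then have "set (map (restrict_seq (php_vars n)) ps)
        \<subseteq> set (take k (map (restrict_seq (php_vars n)) P))"
      by (auto simp: take_map)
    with 2(2) show ?thesis
      using lk_rule_restrict_seq by blast
  qed
qed

lemma restrict_seq_line_formulas:
  assumes "1 \<le> n" "lk_refutation p d (negPHP n) P" "i < length P"
    and "\<psi> \<in> seq_fms (restrict_seq (php_vars n) (P ! i))"
  shows "wf p \<psi> \<and> depth \<psi> \<le> d \<and> fvars \<psi> \<subseteq> php_vars n"
proof -
  obtain \<phi> where \<phi>: "\<phi> \<in> seq_fms (P ! i)" "\<psi> = restrict_vars (php_vars n) \<phi>"
    using assms(4) by (auto simp: seq_fms_restrict_seq)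
  then have "wf p \<phi> \<and> depth \<phi> \<le> d"
    using assms(2,3) by (simp add: lk_refutation_def)
  moreover have "(1, 1) \<in> php_vars n"
    using assms(1) by (simp add: php_vars_def)
  ultimately show ?thesis
    using \<phi>(2) fvars_restrict_vars[of "php_vars n" \<phi>]
    by (simp add: wf_restrict_vars depth_restrict_vars insert_absorb)
qed

lemma refutation_game_restrict_vars:
  assumes "1 \<le> n" "lk_refutation p d (negPHP n) P" "1 + 3 * proof_size P \<le> 2 ^ t"
  shows "refutation_game p (d + 4) n t (map (restrict_seq (php_vars n)) P)"
proof
  let ?P = "map (restrict_seq (php_vars n)) P"
  show "?P \<noteq> []" "last ?P = ([], [])"
    using assms(2) by (auto simp: lk_refutation_def last_map restrict_seq_def)
  show "initial_seq p (negPHP n) (?P ! k) \<or> (\<exists>ps. set ps \<subseteq> set (take k ?P) \<and> lk_rule ps (?P ! k))"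
    if "k < length ?P" for k
    using restrict_seq_line_justified[OF assms(2)] that by simp
  fix m assume m: "m \<le> length ?P"
  then have "\<forall>i<m. \<forall>\<psi>\<in>seq_fms (?P ! i). wf p \<psi> \<and> depth \<psi> \<le> d \<and> fvars \<psi> \<subseteq> php_vars n"
    using restrict_seq_line_formulas[OF assms(1,2)] by simp (meson order_less_le_trans)
  then have "wf p (some_line_false ?P m)" "depth (some_line_false ?P m) \<le> d + 4"
    "fvars (some_line_false ?P m) \<subseteq> php_vars n"
    by (simp_all add: wf_some_line_false depth_some_line_false fvars_some_line_false)
  moreover have "fsize (some_line_false ?P m) \<le> 2 ^ t"
    using fsize_some_line_false[OF m] assms(3) by (simp add: proof_size_restrict_seq)
  ultimately show "admissible p (d + 4) n t (some_line_false ?P m)"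
    by (simp add: admissible_def)
qed

theorem prover_wins_of_refutation:
  assumes "1 \<le> n" "lk_refutation p d (negPHP n) P"
  shows "prover_wins p (d + 4) n (nat \<lceil>12 * log 2 (real (proof_size P))\<rceil>)"
proof -
  define s where "s = proof_size P"
  define r where "r = nat \<lceil>log 2 (real s)\<rceil>"
  define t where "t = nat \<lceil>12 * log 2 (real s)\<rceil>"
  have "2 \<le> s"
    using refutation_size_ge_2[OF assms(2)] by (simp add: s_def)
  then have "1 \<le> log 2 (real s)"
    by simp
  then have "r + 11 \<le> t"
    unfolding r_def t_def by linarith
  have "real s \<le> 2 ^ r"
    unfolding r_def using power_of_nat_log_ge[of 2 "real s"] by simp
  then have "s \<le> 2 ^ r"
    by (metis of_nat_le_iff of_nat_numeral of_nat_power)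
  have "1 + 3 * s \<le> 2 ^ 2 * 2 ^ r"
    using \<open>s \<le> 2 ^ r\<close> \<open>2 \<le> s\<close> by simp
  also have "\<dots> = 2 ^ (r + 2)"
    by (simp add: power_add)
  also have "\<dots> \<le> 2 ^ t"
    using \<open>r + 11 \<le> t\<close> by (intro power_increasing) simp_all
  finally interpret refutation_game p "d + 4" n t "map (restrict_seq (php_vars n)) P"
    using assms by (intro refutation_game_restrict_vars) (simp_all add: s_def)
  have "prover_forces (r + 11) {}"
    using length_le_proof_size[of "map (restrict_seq (php_vars n)) P"] \<open>s \<le> 2 ^ r\<close>
    by (intro forces_refutation) (simp add: proof_size_restrict_seq s_def)
  then have "prover_forces t {}"
    using \<open>r + 11 \<le> t\<close> by (rule prover_forces_mono)
  then have "prover_wins p (d + 4) n t"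
    by (rule prover_wins_if_forces)
  then show ?thesis
    by (simp add: t_def s_def)
qed

theorem lemma2p1:
  fixes p :: nat
  assumes "prime p"
  shows "\<exists>(c::nat) (c'::real). c > 0 \<and> c' > 0 \<and>
    (\<forall>d n s P. d \<ge> 2 \<longrightarrow> n \<ge> 1 \<longrightarrow> s \<ge> 1 \<longrightarrow>
       lk_refutation p d (negPHP n) P \<longrightarrow> proof_size P = s \<longrightarrow>
       prover_wins p (d + c) n (nat \<lceil>c' * log 2 (real s)\<rceil>))"
proof (intro exI[of _ "4::nat"] exI[of _ "12::real"] conjI allI impI)
  fix d n s P
  assume "2 \<le> d" "1 \<le> n" "1 \<le> s" "lk_refutation p d (negPHP n) P" "proof_size P = s"
  then show "prover_wins p (d + 4) n (nat \<lceil>12 * log 2 (real s)\<rceil>)"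
    using prover_wins_of_refutation by blast
qed simp_all

end
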